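(* Let $\Gamma$ be a connected signed graph on $N$ vertices and, for real $t$, let $\mathcal{L}(t)=\mathcal{L}(\Gamma(t))$. The subspace $\mathbf{1}^\perp=\{v\in\mathbb{R}^N:\sum_i v_i=0\}$ is invariant under every $\mathcal{L}(t)$; let $\lambda_1(t),\dots,\lambda_{N-1}(t)$ be the (analytic) eigenvalue branches of $\mathcal{L}(t)$ restricted to $\mathbf{1}^\perp$. Then each $\lambda_i(t)$ is a non-decreasing function of $t$, and each crosses zero transversely: if $\lambda_i(t)=0$ then $\lambda_i'(t)>0$.
   Context: A signed graph $\Gamma$ is a finite simple undirected graph with vertex set $\{1,\dots,N\}$ in which every edge $\{i,j\}$ carries a nonzero real weight $\gamma_{ij}$, which may be of either sign. For real $t$, $\Gamma(t)$ is the weighted graph with the same edges and weights $\gamma_{ij}(t)=\gamma_{ij}$ if $\gamma_{ij}>0$ and $\gamma_{ij}(t)=t\gamma_{ij}$ if $\gamma_{ij}<0$. For a weighted graph with weights $w_{ij}$, its Laplacian is the symmetric matrix with off-diagonal entries $w_{ij}$ (zero for non-edges) and diagonal entries $-\sum_{k\ne i}w_{ik}$. $\mathbf{1}=(1,\dots,1)$. *)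

theory Defs
  imports "HOL-Analysis.Analysis"
begin

text \<open>Vertices are 0,...,N-1 (the paper's 1,...,N shifted by one).
  A signed graph is given by its weight function: gamma i j is the weight of edge {i,j}
  and is 0 exactly for non-edges.\<close>

definition signed_graph :: "nat \<Rightarrow> (nat \<Rightarrow> nat \<Rightarrow> real) \<Rightarrow> bool" where
  "signed_graph N \<gamma> \<longleftrightarrow>
     (\<forall>i j. \<gamma> i j = \<gamma> j i) \<and> (\<forall>i. \<gamma> i i = 0) \<and>
     (\<forall>i j. (N \<le> i \<or> N \<le> j) \<longrightarrow> \<gamma> i j = 0)"

definition sg_edges :: "nat \<Rightarrow> (nat \<Rightarrow> nat \<Rightarrow> real) \<Rightarrow> (nat \<times> nat) set" where
  "sg_edges N \<gamma> = {(a, b). a < N \<and> b < N \<and> \<gamma> a b \<noteq> 0}"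

definition sg_connected :: "nat \<Rightarrow> (nat \<Rightarrow> nat \<Rightarrow> real) \<Rightarrow> bool" where
  "sg_connected N \<gamma> \<longleftrightarrow> (\<forall>i<N. \<forall>j<N. (i, j) \<in> (sg_edges N \<gamma>)\<^sup>*)"

definition sg_at :: "(nat \<Rightarrow> nat \<Rightarrow> real) \<Rightarrow> real \<Rightarrow> nat \<Rightarrow> nat \<Rightarrow> real" where
  "sg_at \<gamma> t i j = (if \<gamma> i j < 0 then t * \<gamma> i j else \<gamma> i j)"

definition laplacian :: "nat \<Rightarrow> (nat \<Rightarrow> nat \<Rightarrow> real) \<Rightarrow> nat \<Rightarrow> nat \<Rightarrow> real" where
  "laplacian N w i j = (if i = j then - (\<Sum>k\<in>{0..<N} - {i}. w i k) else w i j)"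

definition mat_vec :: "nat \<Rightarrow> (nat \<Rightarrow> nat \<Rightarrow> real) \<Rightarrow> (nat \<Rightarrow> real) \<Rightarrow> nat \<Rightarrow> real" where
  "mat_vec N A v = (\<lambda>i. \<Sum>j<N. A i j * v j)"

definition real_analytic :: "(real \<Rightarrow> real) \<Rightarrow> bool" where
  "real_analytic f \<longleftrightarrow>
     (\<forall>x. \<exists>r>0. \<exists>c::nat \<Rightarrow> real. \<forall>y. \<bar>y - x\<bar> < r \<longrightarrow> (\<lambda>n. c n * (y - x) ^ n) sums f y)"

text \<open>lam 0, ..., lam (N-2) are analytic eigenvalue branches of L(t) restricted to 1-perp:
  each is real analytic, and for every t the values lam i t are the eigenvalues, with
  multiplicity, of the (symmetric) restriction of L(t) to 1-perp, i.e. they are the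
  eigenvalues of an orthonormal eigenbasis of 1-perp.\<close>
definition restricted_eigen_branches ::
  "nat \<Rightarrow> (real \<Rightarrow> nat \<Rightarrow> nat \<Rightarrow> real) \<Rightarrow> (nat \<Rightarrow> real \<Rightarrow> real) \<Rightarrow> bool" where
  "restricted_eigen_branches N L lam \<longleftrightarrow>
     (\<forall>i<N-1. real_analytic (lam i)) \<and>
     (\<forall>t. \<exists>v::nat \<Rightarrow> nat \<Rightarrow> real.
        (\<forall>i<N-1. (\<Sum>k<N. v i k) = 0) \<and>
        (\<forall>i<N-1. \<forall>j<N-1. (\<Sum>k<N. v i k * v j k) = (if i = j then 1 else 0)) \<and>
        (\<forall>i<N-1. \<forall>k<N. mat_vec N (L t) (v i) k = lam i t * v i k))"

end

theory Submission
  imports Defs "Jordan_Normal_Form.Determinant"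
begin

(* Write L(t) = A + t B, where A and B are the Laplacians of the positive and of the negative edges
   of Gamma; in the sign convention used here <v, A v> <= 0 <= <v, B v>. By Hellmann-Feynman
   the derivative of a branch is <v, B v> for a unit eigenvector v, hence nonnegative. The graph
   Gamma(-1) carries the weights |gamma_ij|, so by connectedness L(-1) = A - B is negative definite
   on 1-perp: <v, (A - B) v> <= -c |v|^2. For a unit eigenvector of L(t) this reads
   c <= (1 + t) <v, B v> - lambda_i(t), so at a zero of lambda_i the derivative is at least
   c / (1 + t) > 0. The Hellmann-Feynman formula is proved without any continuity of eigenvectors:
   a spectral-gap estimate at t0 forces <v_t, B v_t> to converge to lambda_i'(t0). *)

definition vec_dot :: "nat \<Rightarrow> (nat \<Rightarrow> real) \<Rightarrow> (nat \<Rightarrow> real) \<Rightarrow> real" where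
  "vec_dot N u v = (\<Sum>k<N. u k * v k)"

definition orthonormal_family :: "nat \<Rightarrow> nat \<Rightarrow> (nat \<Rightarrow> nat \<Rightarrow> real) \<Rightarrow> bool" where
  "orthonormal_family N m e \<longleftrightarrow>
     (\<forall>i<m. \<forall>j<m. vec_dot N (e i) (e j) = (if i = j then 1 else 0))"

definition sum_zero_eigenbasis ::
  "nat \<Rightarrow> (nat \<Rightarrow> nat \<Rightarrow> real) \<Rightarrow> (nat \<Rightarrow> real) \<Rightarrow> (nat \<Rightarrow> nat \<Rightarrow> real) \<Rightarrow> bool" where
  "sum_zero_eigenbasis N M \<mu> e \<longleftrightarrow>
     orthonormal_family N (N - 1) e \<and> (\<forall>i<N-1. (\<Sum>k<N. e i k) = 0) \<and>
     (\<forall>i<N-1. \<forall>k<N. mat_vec N M (e i) k = \<mu> i * e i k)"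

lemma restricted_eigen_branches_iff:
  "restricted_eigen_branches N L lam \<longleftrightarrow>
     (\<forall>i<N-1. real_analytic (lam i)) \<and> (\<forall>t. \<exists>e. sum_zero_eigenbasis N (L t) (\<lambda>i. lam i t) e)"
  unfolding restricted_eigen_branches_def sum_zero_eigenbasis_def orthonormal_family_def vec_dot_def
  by blast

lemma sum_zero_eigenbasis_memberD:
  assumes "sum_zero_eigenbasis N M \<mu> e" and "i < N - 1"
  shows "vec_dot N (e i) (e i) = 1" and "(\<Sum>k<N. e i k) = 0"
    and "\<forall>k<N. mat_vec N M (e i) k = \<mu> i * e i k"
  using assms by (auto simp: sum_zero_eigenbasis_def orthonormal_family_def)

lemma vec_dot_commute: "vec_dot N u v = vec_dot N v u"
  unfolding vec_dot_def by (simp add: mult.commute)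

lemma mat_vec_add_scaled:
  "mat_vec N (\<lambda>a b. A a b + t * B a b) v k = mat_vec N A v k + t * mat_vec N B v k"
  unfolding mat_vec_def by (simp add: sum.distrib sum_distrib_left algebra_simps)

text \<open>For square matrices a left inverse is also a right inverse.\<close>
lemma orthonormal_family_columns:
  assumes "orthonormal_family n n f" "a < n" "b < n"
  shows "(\<Sum>i<n. f i a * f i b) = (if a = b then 1 else 0)"
proof -
  define F where "F = mat n n (\<lambda>(i, k). f i k)"
  have F: "F \<in> carrier_mat n n" by (simp add: F_def)
  have "F * transpose_mat F = 1\<^sub>m n"
    using assms(1) unfolding orthonormal_family_def vec_dot_def
    by (auto simp: F_def scalar_prod_def atLeast0LessThan intro!: eq_matI)
  then have "transpose_mat F * F = 1\<^sub>m n"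
    using F by (intro mat_mult_left_right_inverse[of F n]) auto
  then have "(transpose_mat F * F) $$ (a, b) = 1\<^sub>m n $$ (a, b)" by simp
  then show ?thesis using F assms(2,3) by (simp add: F_def scalar_prod_def atLeast0LessThan)
qed

text \<open>Completing the family by the unit vector along \<open>\<one>\<close> gives an orthonormal basis of \<open>\<real>\<^sup>N\<close>.\<close>
lemma sum_zero_orthonormal_completeness:
  assumes on: "orthonormal_family N (N - 1) e" and z: "\<forall>i<N-1. (\<Sum>k<N. e i k) = 0"
    and a: "a < N" and b: "b < N"
  shows "(\<Sum>j<N-1. e j a * e j b) = (if a = b then 1 else 0) - 1 / real N"
proof -
  define u where "u = 1 / sqrt (real N)"
  define f where "f j = (if j < N - 1 then e j else (\<lambda>k. u))" for j
  have N: "N = Suc (N - 1)" using a by simp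
  have uu: "u * u = 1 / real N" using a by (simp add: u_def real_sqrt_mult[symmetric])
  have "orthonormal_family N N f"
    unfolding orthonormal_family_def
  proof (intro allI impI)
    fix i j assume ij: "i < N" "j < N"
    consider "i < N - 1" "j < N - 1" | "i < N - 1" "j = N - 1" | "i = N - 1" "j < N - 1"
      | "i = N - 1" "j = N - 1"
      using ij by linarith
    then show "vec_dot N (f i) (f j) = (if i = j then 1 else 0)"
    proof cases
      case 1 then show ?thesis using on by (simp add: f_def orthonormal_family_def)
    next
      case 2 then show ?thesis using z by (simp add: f_def vec_dot_def sum_distrib_right[symmetric])
    next
      case 3 then show ?thesis using z by (simp add: f_def vec_dot_def sum_distrib_left[symmetric])
    next
      case 4 then show ?thesis using uu a by (simp add: f_def vec_dot_def)
    qed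
  qed
  then have "(\<Sum>i<N. f i a * f i b) = (if a = b then 1 else 0)"
    using orthonormal_family_columns a b by blast
  moreover have "(\<Sum>i<N. f i a * f i b) = (\<Sum>j<N-1. e j a * e j b) + 1 / real N"
    by (subst N) (simp add: f_def uu del: N)
  ultimately show ?thesis by simp
qed

lemma sum_zero_orthonormal_expansion:
  assumes on: "orthonormal_family N (N - 1) e" and z: "\<forall>i<N-1. (\<Sum>k<N. e i k) = 0"
    and v: "(\<Sum>k<N. v k) = 0" and a: "a < N"
  shows "v a = (\<Sum>j<N-1. vec_dot N v (e j) * e j a)"
proof -
  have "(\<Sum>j<N-1. vec_dot N v (e j) * e j a) = (\<Sum>k<N. v k * (\<Sum>j<N-1. e j a * e j k))"
    unfolding vec_dot_def sum_distrib_right sum_distrib_left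
    by (subst sum.swap) (simp add: algebra_simps)
  also have "\<dots> = (\<Sum>k<N. (if k = a then v k else 0) - v k / real N)"
    using sum_zero_orthonormal_completeness[OF on z a]
    by (intro sum.cong refl) (auto simp: right_diff_distrib)
  also have "\<dots> = v a"
    using a v by (simp add: sum_subtractf sum_divide_distrib[symmetric])
  finally show ?thesis by simp
qed

lemma vec_dot_expansion:
  assumes "\<forall>a<N. x a = (\<Sum>j<m. d j * e j a)"
  shows "vec_dot N y x = (\<Sum>j<m. d j * vec_dot N y (e j))"
proof -
  have "vec_dot N y x = (\<Sum>a<N. \<Sum>j<m. d j * (y a * e j a))"
    unfolding vec_dot_def using assms by (intro sum.cong refl) (simp add: sum_distrib_left algebra_simps)
  also have "\<dots> = (\<Sum>j<m. d j * vec_dot N y (e j))"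
    by (subst sum.swap) (simp add: vec_dot_def sum_distrib_left)
  finally show ?thesis .
qed

lemma mat_vec_eigen_expansion:
  assumes "\<forall>a<N. x a = (\<Sum>j<m. d j * e j a)"
    and "\<forall>j<m. \<forall>a<N. mat_vec N M (e j) a = \<mu> j * e j a" and "a < N"
  shows "mat_vec N M x a = (\<Sum>j<m. d j * \<mu> j * e j a)"
proof -
  have "mat_vec N M x a = (\<Sum>b<N. \<Sum>j<m. M a b * (d j * e j b))"
    unfolding mat_vec_def using assms(1) by (intro sum.cong refl) (simp add: sum_distrib_left)
  also have "\<dots> = (\<Sum>j<m. d j * mat_vec N M (e j) a)"
    by (subst sum.swap) (simp add: mat_vec_def sum_distrib_left algebra_simps)
  also have "\<dots> = (\<Sum>j<m. d j * \<mu> j * e j a)"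
    using assms(2,3) by (intro sum.cong refl) simp
  finally show ?thesis .
qed

lemma vec_dot_orthonormal_coeff:
  assumes "orthonormal_family N m e" and "\<forall>a<N. x a = (\<Sum>j<m. d j * e j a)" and "l < m"
  shows "vec_dot N (e l) x = d l"
proof -
  have "vec_dot N (e l) x = (\<Sum>j<m. d j * vec_dot N (e l) (e j))"
    by (rule vec_dot_expansion[OF assms(2)])
  also have "\<dots> = (\<Sum>j<m. if j = l then d j else 0)"
    using assms(1,3) unfolding orthonormal_family_def by (intro sum.cong refl) auto
  finally show ?thesis using assms(3) by simp
qed

lemma vec_dot_residual_le_gap:
  assumes basis: "sum_zero_eigenbasis N M \<mu>s e" and v: "(\<Sum>k<N. v k) = 0"
    and g: "g > 0" and gap: "\<forall>j<N-1. \<mu>s j \<noteq> \<mu> \<longrightarrow> g \<le> \<bar>\<mu>s j - \<mu>\<bar>"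
    and r: "r = (\<lambda>a. mat_vec N M v a - \<mu> * v a)"
  shows "\<bar>vec_dot N v r\<bar> \<le> vec_dot N r r / g"
proof -
  let ?m = "N - 1"
  define c where "c j = vec_dot N v (e j)" for j
  define d where "d j = c j * (\<mu>s j - \<mu>)" for j
  have on: "orthonormal_family N ?m e"
    using basis by (simp add: sum_zero_eigenbasis_def)
  have vx: "\<forall>a<N. v a = (\<Sum>j<?m. c j * e j a)"
    using sum_zero_orthonormal_expansion[OF on _ v] basis by (simp add: sum_zero_eigenbasis_def c_def)
  have rx: "\<forall>a<N. r a = (\<Sum>j<?m. d j * e j a)"
  proof (intro allI impI)
    fix a assume a: "a < N"
    have "mat_vec N M v a = (\<Sum>j<?m. c j * \<mu>s j * e j a)"
      using mat_vec_eigen_expansion[OF vx _ a] basis by (simp add: sum_zero_eigenbasis_def)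
    then show "r a = (\<Sum>j<?m. d j * e j a)"
      using vx a by (simp add: r d_def sum_distrib_left sum_subtractf[symmetric] algebra_simps)
  qed
  have vr: "vec_dot N v r = (\<Sum>j<?m. c j * c j * (\<mu>s j - \<mu>))"
    using vec_dot_expansion[OF rx, of v] by (simp add: d_def c_def algebra_simps)
  have "vec_dot N r r = (\<Sum>j<?m. d j * vec_dot N r (e j))" by (rule vec_dot_expansion[OF rx])
  also have "\<dots> = (\<Sum>j<?m. d j * d j)"
    using vec_dot_orthonormal_coeff[OF on rx] by (simp add: vec_dot_commute)
  finally have rr: "vec_dot N r r = (\<Sum>j<?m. d j * d j)" .
  have summand_le: "\<bar>c j * c j * (\<mu>s j - \<mu>)\<bar> \<le> d j * d j / g" if "j < ?m" for j
  proof (cases "\<mu>s j = \<mu>")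
    case False
    then have "g * \<bar>\<mu>s j - \<mu>\<bar> \<le> \<bar>\<mu>s j - \<mu>\<bar> * \<bar>\<mu>s j - \<mu>\<bar>"
      using gap that by (intro mult_right_mono) auto
    then have "g * (c j * c j * \<bar>\<mu>s j - \<mu>\<bar>) \<le> c j * c j * (\<bar>\<mu>s j - \<mu>\<bar> * \<bar>\<mu>s j - \<mu>\<bar>)"
      by (metis mult.left_commute mult_left_mono zero_le_square)
    moreover have "\<bar>c j * c j * (\<mu>s j - \<mu>)\<bar> = c j * c j * \<bar>\<mu>s j - \<mu>\<bar>"
      by (simp add: abs_mult)
    moreover have "d j * d j = c j * c j * (\<bar>\<mu>s j - \<mu>\<bar> * \<bar>\<mu>s j - \<mu>\<bar>)"
      by (simp add: d_def algebra_simps)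
    ultimately show ?thesis
      using g by (simp add: pos_le_divide_eq mult.commute)
  qed (simp add: d_def)
  have "\<bar>vec_dot N v r\<bar> \<le> (\<Sum>j<?m. \<bar>c j * c j * (\<mu>s j - \<mu>)\<bar>)" unfolding vr by (rule sum_abs)
  also have "\<dots> \<le> (\<Sum>j<?m. d j * d j / g)" by (intro sum_mono summand_le) simp
  finally show ?thesis by (simp add: rr sum_divide_distrib)
qed

lemma vec_dot_mat_vec_le_of_eigenvalues_le:
  assumes basis: "sum_zero_eigenbasis N M \<mu> e" and bound: "\<forall>j<N-1. \<mu> j \<le> - c"
    and v: "(\<Sum>k<N. v k) = 0"
  shows "vec_dot N v (mat_vec N M v) \<le> - c * vec_dot N v v"
proof -
  let ?m = "N - 1"
  define x where "x j = vec_dot N v (e j)" for j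
  have on: "orthonormal_family N ?m e"
    using basis by (simp add: sum_zero_eigenbasis_def)
  have vx: "\<forall>a<N. v a = (\<Sum>j<?m. x j * e j a)"
    using sum_zero_orthonormal_expansion[OF on _ v] basis by (simp add: sum_zero_eigenbasis_def x_def)
  have Mx: "\<forall>a<N. mat_vec N M v a = (\<Sum>j<?m. (x j * \<mu> j) * e j a)"
    using mat_vec_eigen_expansion[OF vx] basis by (simp add: sum_zero_eigenbasis_def)
  have "vec_dot N v (mat_vec N M v) = (\<Sum>j<?m. \<mu> j * (x j * x j))"
    using vec_dot_expansion[OF Mx, of v] by (simp add: x_def algebra_simps)
  also have "\<dots> \<le> (\<Sum>j<?m. - c * (x j * x j))"
    using bound by (intro sum_mono mult_right_mono) auto
  also have "\<dots> = - c * vec_dot N v v"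
    using vec_dot_expansion[OF vx, of v] by (simp add: x_def sum_distrib_left)
  finally show ?thesis .
qed

text \<open>The extra element \<open>1\<close> keeps the minimum well-defined and positive when no \<open>\<mu> j\<close> differs
  from \<open>\<nu>\<close>.\<close>
lemma finite_gap:
  fixes \<mu> :: "nat \<Rightarrow> real"
  obtains g where "g > 0" and "\<forall>j<m. \<mu> j \<noteq> \<nu> \<longrightarrow> g \<le> \<bar>\<mu> j - \<nu>\<bar>"
proof -
  define G where "G = (\<lambda>j. \<bar>\<mu> j - \<nu>\<bar>) ` {j. j < m \<and> \<mu> j \<noteq> \<nu>}"
  have finite: "finite (insert 1 G)" by (simp add: G_def)
  show ?thesis
  proof (rule that)
    show "Min (insert 1 G) > 0"
      using finite by (subst Min_gr_iff) (auto simp: G_def)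
    show "\<forall>j<m. \<mu> j \<noteq> \<nu> \<longrightarrow> Min (insert 1 G) \<le> \<bar>\<mu> j - \<nu>\<bar>"
      using finite by (auto simp: G_def intro!: Min_le)
  qed
qed

lemma eigenbasis_negative_definite_uniform:
  assumes basis: "sum_zero_eigenbasis N M \<mu> e"
    and negative: "\<And>v. (\<Sum>k<N. v k) = 0 \<Longrightarrow> \<exists>k<N. v k \<noteq> 0 \<Longrightarrow> vec_dot N v (mat_vec N M v) < 0"
  obtains c where "c > 0" and "\<And>v. (\<Sum>k<N. v k) = 0 \<Longrightarrow> vec_dot N v (mat_vec N M v) \<le> - c * vec_dot N v v"
proof -
  have \<mu>_neg: "\<mu> j < 0" if j: "j < N - 1" for j
  proof -
    note unit = sum_zero_eigenbasis_memberD(1)[OF basis j]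
    then have "\<exists>k<N. e j k \<noteq> 0"
      unfolding vec_dot_def by (metis (mono_tags) lessThan_iff mult_eq_0_iff sum.neutral zero_neq_one)
    then have "vec_dot N (e j) (mat_vec N M (e j)) < 0"
      using negative sum_zero_eigenbasis_memberD(2)[OF basis j] by blast
    moreover have "vec_dot N (e j) (mat_vec N M (e j)) = \<mu> j"
      using sum_zero_eigenbasis_memberD(3)[OF basis j] unit
      by (simp add: vec_dot_def algebra_simps flip: sum_distrib_left)
    ultimately show ?thesis by simp
  qed
  obtain c where c: "c > 0" and gap: "\<forall>j<N-1. \<mu> j \<noteq> 0 \<longrightarrow> c \<le> \<bar>\<mu> j - 0\<bar>"
    by (rule finite_gap)
  have "\<forall>j<N-1. \<mu> j \<le> - c"
    using gap \<mu>_neg by force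
  then show ?thesis
    using that c vec_dot_mat_vec_le_of_eigenvalues_le[OF basis] by blast
qed

lemma vec_dot_mat_vec_unit_le:
  assumes unit: "vec_dot N v v = 1"
  shows "vec_dot N (mat_vec N B v) (mat_vec N B v) \<le> real N * (\<Sum>a<N. \<Sum>b<N. \<bar>B a b\<bar>)\<^sup>2"
proof -
  define K where "K = (\<Sum>a<N. \<Sum>b<N. \<bar>B a b\<bar>)"
  have coord: "\<bar>v b\<bar> \<le> 1" if "b < N" for b
  proof -
    have "(v b)\<^sup>2 \<le> vec_dot N v v"
      unfolding vec_dot_def power2_eq_square using that by (intro member_le_sum) auto
    then show ?thesis using unit by (simp add: abs_square_le_1)
  qed
  have row: "\<bar>mat_vec N B v a\<bar> \<le> K" if "a < N" for a
  proof -
    have "\<bar>mat_vec N B v a\<bar> \<le> (\<Sum>b<N. \<bar>B a b * v b\<bar>)"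
      unfolding mat_vec_def by (rule sum_abs)
    also have "\<dots> \<le> (\<Sum>b<N. \<bar>B a b\<bar>)"
      using coord by (intro sum_mono) (simp add: abs_mult mult_left_le)
    also have "\<dots> \<le> K"
      unfolding K_def using that
      by (intro member_le_sum[of a "{..<N}" "\<lambda>a. \<Sum>b<N. \<bar>B a b\<bar>"]) (auto intro: sum_nonneg)
    finally show ?thesis .
  qed
  have "vec_dot N (mat_vec N B v) (mat_vec N B v) \<le> (\<Sum>a<N. K\<^sup>2)"
    unfolding vec_dot_def
  proof (intro sum_mono)
    fix a assume "a \<in> {..<N}"
    then have "\<bar>mat_vec N B v a\<bar>\<^sup>2 \<le> K\<^sup>2" using row by (intro power_mono) simp_all
    then show "mat_vec N B v a * mat_vec N B v a \<le> K\<^sup>2" by (simp add: power2_eq_square)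
  qed
  then show ?thesis by (simp add: K_def)
qed

lemma real_analytic_has_derivative:
  assumes "real_analytic f"
  obtains d where "(f has_real_derivative d) (at x)"
proof -
  obtain r c where r: "r > 0"
    and sums': "\<forall>y. \<bar>y - x\<bar> < r \<longrightarrow> (\<lambda>n. c n * (y - x) ^ n) sums f y"
    using assms unfolding real_analytic_def by blast
  note sums = sums'[rule_format]
  define P where "P z = (\<Sum>n. c n * z ^ n)" for z :: real
  define D where "D = (\<Sum>n. diffs c n * 0 ^ n)"
  have "summable (\<lambda>n. c n * z ^ n)" if "norm z < r" for z
    using sums[of "x + z"] that by (auto simp: sums_iff)
  then have "(P has_real_derivative D) (at 0)"
    unfolding P_def D_def using r by (intro termdiffs_strong'[of r]) auto
  then have "(P has_real_derivative D) (at (x - x))"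
    by simp
  then have deriv: "((\<lambda>y. P (y - x)) has_real_derivative D * (1 - 0)) (at x)"
    by (rule DERIV_chain2) (intro DERIV_diff DERIV_ident DERIV_const)
  have eq: "P (y - x) = f y" if "y \<in> ball x r" for y
  proof -
    have "\<bar>y - x\<bar> < r" using that by (simp add: dist_real_def abs_minus_commute)
    then show ?thesis using sums[of y] by (simp add: P_def sums_iff)
  qed
  have "(f has_real_derivative D * (1 - 0)) (at x)"
    by (rule has_field_derivative_transform_within_open[OF deriv open_ball[of x r] _ eq]) (metis centre_in_ball r)
  then show ?thesis by (rule that)
qed

lemma real_analytic_mono:
  assumes "real_analytic f" and "\<And>x d. (f has_real_derivative d) (at x) \<Longrightarrow> 0 \<le> d"
  shows "mono f"
proof (rule monoI)
  fix x y :: real assume "x \<le> y"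
  then show "f x \<le> f y"
  proof (rule DERIV_nonneg_imp_nondecreasing)
    fix z
    obtain d where "(f has_real_derivative d) (at z)"
      using real_analytic_has_derivative[OF assms(1)] .
    with assms(2) show "\<exists>d. (f has_real_derivative d) (at z) \<and> 0 \<le> d" by blast
  qed
qed

text \<open>The residual of \<open>v\<close> with respect to \<open>A + t\<^sub>0 B\<close> and \<open>\<mu>\<close> is
  \<open>(\<nu> - \<mu>) v - (t - t\<^sub>0) B v\<close>; the gap bound applies to it.\<close>
lemma perturbed_eigenvalue_estimate:
  fixes A B :: "nat \<Rightarrow> nat \<Rightarrow> real"
  assumes basis: "sum_zero_eigenbasis N (\<lambda>a b. A a b + t0 * B a b) \<mu>s e"
    and g: "g > 0" and gap: "\<forall>j<N-1. \<mu>s j \<noteq> \<mu> \<longrightarrow> g \<le> \<bar>\<mu>s j - \<mu>\<bar>"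
    and v: "(\<Sum>k<N. v k) = 0" and unit: "vec_dot N v v = 1"
    and eig: "\<forall>k<N. mat_vec N A v k + t * mat_vec N B v k = \<nu> * v k"
  shows "\<bar>(\<nu> - \<mu>) - (t - t0) * vec_dot N v (mat_vec N B v)\<bar>
           \<le> (2 * (\<nu> - \<mu>)\<^sup>2 + 2 * (t - t0)\<^sup>2 * vec_dot N (mat_vec N B v) (mat_vec N B v)) / g"
proof -
  define Bv where "Bv = mat_vec N B v"
  define r where "r = (\<lambda>a. mat_vec N (\<lambda>a b. A a b + t0 * B a b) v a - \<mu> * v a)"
  have r_eq: "r a = (\<nu> - \<mu>) * v a - (t - t0) * Bv a" if "a < N" for a
    using eig that by (simp add: r_def Bv_def mat_vec_add_scaled algebra_simps)
  have "vec_dot N v r = (\<Sum>a<N. (\<nu> - \<mu>) * (v a * v a) - (t - t0) * (v a * Bv a))"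
    unfolding vec_dot_def by (intro sum.cong refl) (simp add: r_eq algebra_simps)
  also have "\<dots> = (\<nu> - \<mu>) - (t - t0) * vec_dot N v Bv"
    using unit by (simp add: vec_dot_def sum_subtractf sum_distrib_left[symmetric])
  finally have vr: "vec_dot N v r = (\<nu> - \<mu>) - (t - t0) * vec_dot N v Bv" .
  have "vec_dot N r r \<le> (\<Sum>a<N. 2 * (\<nu> - \<mu>)\<^sup>2 * (v a * v a) + 2 * (t - t0)\<^sup>2 * (Bv a * Bv a))"
    unfolding vec_dot_def
  proof (intro sum_mono)
    fix a assume "a \<in> {..<N}"
    then have "r a * r a = ((\<nu> - \<mu>) * v a - (t - t0) * Bv a)\<^sup>2"
      by (simp add: r_eq power2_eq_square)
    also have "\<dots> \<le> 2 * ((\<nu> - \<mu>) * v a)\<^sup>2 + 2 * ((t - t0) * Bv a)\<^sup>2"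
      by (smt (verit) zero_le_power2 power2_diff power2_sum)
    finally show "r a * r a \<le> 2 * (\<nu> - \<mu>)\<^sup>2 * (v a * v a) + 2 * (t - t0)\<^sup>2 * (Bv a * Bv a)"
      by (simp add: power2_eq_square algebra_simps)
  qed
  also have "\<dots> = 2 * (\<nu> - \<mu>)\<^sup>2 + 2 * (t - t0)\<^sup>2 * vec_dot N Bv Bv"
    using unit by (simp add: vec_dot_def sum.distrib sum_distrib_left[symmetric])
  finally have rr: "vec_dot N r r \<le> 2 * (\<nu> - \<mu>)\<^sup>2 + 2 * (t - t0)\<^sup>2 * vec_dot N Bv Bv" .
  have "\<bar>vec_dot N v r\<bar> \<le> vec_dot N r r / g"
    by (rule vec_dot_residual_le_gap[OF basis v g gap r_def])
  also have "\<dots> \<le> (2 * (\<nu> - \<mu>)\<^sup>2 + 2 * (t - t0)\<^sup>2 * vec_dot N Bv Bv) / g"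
    using rr g by (intro divide_right_mono) auto
  finally show ?thesis by (simp add: vr Bv_def)
qed

lemma eigen_branch_difference_quotient_estimate:
  fixes A B :: "nat \<Rightarrow> nat \<Rightarrow> real"
  assumes V: "\<And>t. sum_zero_eigenbasis N (\<lambda>a b. A a b + t * B a b) (\<lambda>j. lam j t) (V t)"
    and i: "i < N - 1" and g: "g > 0"
    and gap: "\<forall>j<N-1. lam j t0 \<noteq> lam i t0 \<longrightarrow> g \<le> \<bar>lam j t0 - lam i t0\<bar>"
    and t: "t \<noteq> t0"
  defines "\<Delta> \<equiv> (lam i t - lam i t0) / (t - t0)" and "\<beta> \<equiv> real N * (\<Sum>a<N. \<Sum>b<N. \<bar>B a b\<bar>)\<^sup>2"
  shows "\<bar>\<Delta> - vec_dot N (V t i) (mat_vec N B (V t i))\<bar> \<le> 2 * \<bar>t - t0\<bar> * (\<Delta>\<^sup>2 + \<beta>) / g"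
proof -
  define v where "v = V t i"
  define q where "q = vec_dot N v (mat_vec N B v)"
  define s where "s = t - t0"
  define dl where "dl = lam i t - lam i t0"
  have s: "\<bar>s\<bar> > 0" using t by (simp add: s_def)
  have dl: "dl = s * \<Delta>" using s by (simp add: dl_def s_def \<Delta>_def)
  note unit = sum_zero_eigenbasis_memberD(1)[OF V i, of t, folded v_def]
    and v0 = sum_zero_eigenbasis_memberD(2)[OF V i, of t, folded v_def]
  have eig: "\<forall>k<N. mat_vec N A v k + t * mat_vec N B v k = lam i t * v k"
    using sum_zero_eigenbasis_memberD(3)[OF V i, of t] by (simp add: v_def mat_vec_add_scaled)
  have "\<bar>s\<bar> * \<bar>\<Delta> - q\<bar> = \<bar>dl - s * q\<bar>"
    by (simp add: dl abs_mult[symmetric] right_diff_distrib)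
  also have "\<dots> \<le> (2 * dl\<^sup>2 + 2 * s\<^sup>2 * vec_dot N (mat_vec N B v) (mat_vec N B v)) / g"
    using perturbed_eigenvalue_estimate[OF V[of t0] g gap v0 unit eig]
    by (simp add: q_def s_def dl_def)
  also have "\<dots> \<le> (2 * dl\<^sup>2 + 2 * s\<^sup>2 * \<beta>) / g"
    using vec_dot_mat_vec_unit_le[OF unit, of B] g unfolding \<beta>_def
    by (intro divide_right_mono add_left_mono mult_left_mono) auto
  also have "\<dots> = 2 * (\<bar>s\<bar> * \<bar>s\<bar>) * (\<Delta>\<^sup>2 + \<beta>) / g"
    by (simp add: dl abs_mult_self_eq power2_eq_square algebra_simps)
  also have "\<dots> = \<bar>s\<bar> * (2 * \<bar>s\<bar> * (\<Delta>\<^sup>2 + \<beta>) / g)"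
    by (simp add: mult_ac)
  finally have "\<bar>s\<bar> * \<bar>\<Delta> - q\<bar> \<le> \<bar>s\<bar> * (2 * \<bar>s\<bar> * (\<Delta>\<^sup>2 + \<beta>) / g)" .
  then show ?thesis
    unfolding q_def v_def s_def[symmetric] by (rule mult_le_cancel_left_pos[OF s, THEN iffD1])
qed

text \<open>Hellmann--Feynman for an eigenvalue branch. The eigenvectors \<open>V t\<close> are arbitrary, in
  particular not assumed to depend continuously on \<open>t\<close>.\<close>
lemma eigen_branch_rayleigh_tendsto:
  fixes A B :: "nat \<Rightarrow> nat \<Rightarrow> real"
  assumes V: "\<And>t. sum_zero_eigenbasis N (\<lambda>a b. A a b + t * B a b) (\<lambda>j. lam j t) (V t)"
    and i: "i < N - 1" and D: "(lam i has_real_derivative d) (at t0)"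
  shows "((\<lambda>t. vec_dot N (V t i) (mat_vec N B (V t i))) \<longlongrightarrow> d) (at t0)"
proof -
  define q where "q t = vec_dot N (V t i) (mat_vec N B (V t i))" for t
  define \<Delta> where "\<Delta> t = (lam i t - lam i t0) / (t - t0)" for t
  define \<beta> where "\<beta> = real N * (\<Sum>a<N. \<Sum>b<N. \<bar>B a b\<bar>)\<^sup>2"
  obtain g where g: "g > 0" and gap: "\<forall>j<N-1. lam j t0 \<noteq> lam i t0 \<longrightarrow> g \<le> \<bar>lam j t0 - lam i t0\<bar>"
    by (rule finite_gap)
  define bound where "bound t = 2 * \<bar>t - t0\<bar> * ((\<Delta> t)\<^sup>2 + \<beta>) / g" for t
  have "\<forall>t. t \<noteq> t0 \<longrightarrow> norm (\<Delta> t - q t) \<le> bound t"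
    using eigen_branch_difference_quotient_estimate[OF V i g gap]
    by (simp add: \<Delta>_def q_def \<beta>_def bound_def)
  then have close: "eventually (\<lambda>t. norm (\<Delta> t - q t) \<le> bound t) (at t0)"
    unfolding eventually_at_filter by (auto intro: always_eventually)
  have \<Delta>: "(\<Delta> \<longlongrightarrow> d) (at t0)"
    using D by (simp add: has_field_derivative_iff \<Delta>_def[abs_def])
  then have "(bound \<longlongrightarrow> 2 * \<bar>t0 - t0\<bar> * (d\<^sup>2 + \<beta>) / g) (at t0)"
    unfolding bound_def[abs_def] using g by (intro tendsto_intros) auto
  then have "(bound \<longlongrightarrow> 0) (at t0)"
    by simp
  with close have "((\<lambda>t. \<Delta> t - q t) \<longlongrightarrow> 0) (at t0)"
    by (rule Lim_null_comparison)
  from tendsto_diff[OF \<Delta> this] show ?thesis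
    by (simp add: q_def)
qed

lemma vec_dot_mat_vec_diff_eigenvector:
  assumes unit: "vec_dot N v v = 1"
    and eig: "\<forall>k<N. mat_vec N A v k + t * mat_vec N B v k = \<nu> * v k"
  shows "vec_dot N v (mat_vec N (\<lambda>a b. A a b - B a b) v) = \<nu> - (1 + t) * vec_dot N v (mat_vec N B v)"
proof -
  have Av: "mat_vec N (\<lambda>a b. A a b - B a b) v k = \<nu> * v k - (1 + t) * mat_vec N B v k"
    if "k < N" for k
  proof -
    have "mat_vec N (\<lambda>a b. A a b - B a b) v k = mat_vec N A v k - mat_vec N B v k"
      by (simp add: mat_vec_def left_diff_distrib sum_subtractf)
    moreover have "mat_vec N A v k + t * mat_vec N B v k = \<nu> * v k"
      using eig that by blast
    ultimately show ?thesis by (simp add: algebra_simps)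
  qed
  have "vec_dot N v (mat_vec N (\<lambda>a b. A a b - B a b) v)
      = (\<Sum>k<N. \<nu> * (v k * v k) - (1 + t) * (v k * mat_vec N B v k))"
    unfolding vec_dot_def by (intro sum.cong refl) (simp add: Av algebra_simps)
  also have "\<dots> = \<nu> - (1 + t) * vec_dot N v (mat_vec N B v)"
    using unit by (simp add: vec_dot_def sum_subtractf sum_distrib_left[symmetric])
  finally show ?thesis .
qed

lemma eigen_branch_derivative_bounds:
  fixes A B :: "nat \<Rightarrow> nat \<Rightarrow> real"
  assumes V: "\<And>t. sum_zero_eigenbasis N (\<lambda>a b. A a b + t * B a b) (\<lambda>j. lam j t) (V t)"
    and i: "i < N - 1" and D: "(lam i has_real_derivative d) (at t0)"
    and B_nonneg: "\<And>v. 0 \<le> vec_dot N v (mat_vec N B v)"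
    and definite: "\<And>v. (\<Sum>k<N. v k) = 0 \<Longrightarrow>
       vec_dot N v (mat_vec N (\<lambda>a b. A a b - B a b) v) \<le> - c * vec_dot N v v"
  shows "0 \<le> d" and "c \<le> (1 + t0) * d - lam i t0"
proof -
  define q where "q t = vec_dot N (V t i) (mat_vec N B (V t i))" for t
  have q: "(q \<longlongrightarrow> d) (at t0)"
    unfolding q_def by (rule eigen_branch_rayleigh_tendsto[OF V i D])
  have "\<forall>t. 0 \<le> q t" by (simp add: q_def B_nonneg)
  then show "0 \<le> d" by (rule tendsto_lowerbound[OF q always_eventually at_neq_bot])
  have lower: "c \<le> (1 + t) * q t - lam i t" for t
  proof -
    note unit = sum_zero_eigenbasis_memberD(1)[OF V i, of t]
    have "vec_dot N (V t i) (mat_vec N (\<lambda>a b. A a b - B a b) (V t i)) = lam i t - (1 + t) * q t"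
      using vec_dot_mat_vec_diff_eigenvector[OF unit] sum_zero_eigenbasis_memberD(3)[OF V i, of t]
      by (simp add: q_def mat_vec_add_scaled)
    then show ?thesis
      using definite[OF sum_zero_eigenbasis_memberD(2)[OF V i, of t]] unit by simp
  qed
  have lim: "((\<lambda>t. (1 + t) * q t - lam i t) \<longlongrightarrow> (1 + t0) * d - lam i t0) (at t0)"
    using q DERIV_isCont[OF D] by (intro tendsto_intros) (auto simp: isCont_def)
  have "\<forall>t. c \<le> (1 + t) * q t - lam i t" using lower by blast
  then show "c \<le> (1 + t0) * d - lam i t0"
    by (rule tendsto_lowerbound[OF lim always_eventually at_neq_bot])
qed

lemma sum_sum_swap_symmetric:
  fixes w :: "nat \<Rightarrow> nat \<Rightarrow> real"
  assumes "\<And>i j. w i j = w j i"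
  shows "(\<Sum>a<N. \<Sum>j<N. w a j * f a j) = (\<Sum>a<N. \<Sum>j<N. w a j * f j a)"
  using assms by (subst sum.swap) simp

lemma mat_vec_laplacian:
  assumes "w a a = 0" and "a < N"
  shows "mat_vec N (laplacian N w) v a = (\<Sum>j<N. w a j * (v j - v a))"
proof -
  have "{0..<N} - {a} = {..<N} - {a}" by auto
  then have "mat_vec N (laplacian N w) v a
      = - (\<Sum>j\<in>{..<N} - {a}. w a j) * v a + (\<Sum>j\<in>{..<N} - {a}. w a j * v j)"
    unfolding mat_vec_def using assms by (simp add: sum.remove laplacian_def)
  also have "\<dots> = (\<Sum>j\<in>{..<N} - {a}. w a j * (v j - v a))"
    by (simp add: right_diff_distrib sum_subtractf sum_distrib_right)
  also have "\<dots> = (\<Sum>j<N. w a j * (v j - v a))"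
    using assms by (simp add: sum.remove)
  finally show ?thesis .
qed

lemma sum_mat_vec_laplacian:
  fixes w :: "nat \<Rightarrow> nat \<Rightarrow> real"
  assumes sym: "\<And>i j. w i j = w j i" and diag: "\<And>i. w i i = 0"
  shows "(\<Sum>k<N. mat_vec N (laplacian N w) v k) = 0"
proof -
  define S where "S = (\<Sum>a<N. \<Sum>j<N. w a j * (v j - v a))"
  have "S = (\<Sum>a<N. \<Sum>j<N. w a j * (v a - v j))"
    unfolding S_def by (rule sum_sum_swap_symmetric[OF sym])
  also have "\<dots> = - S"
    unfolding S_def by (simp add: sum_negf[symmetric] algebra_simps)
  finally have "S = 0" by simp
  then show ?thesis
    unfolding S_def by (simp add: mat_vec_laplacian diag)
qed

lemma vec_dot_laplacian:
  fixes w :: "nat \<Rightarrow> nat \<Rightarrow> real"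
  assumes sym: "\<And>i j. w i j = w j i" and diag: "\<And>i. w i i = 0"
  shows "vec_dot N v (mat_vec N (laplacian N w) v) = - (\<Sum>a<N. \<Sum>j<N. w a j * (v j - v a)\<^sup>2) / 2"
proof -
  define S where "S = (\<Sum>a<N. \<Sum>j<N. w a j * (v a * (v j - v a)))"
  have S: "vec_dot N v (mat_vec N (laplacian N w) v) = S"
    unfolding S_def vec_dot_def by (simp add: mat_vec_laplacian diag sum_distrib_left algebra_simps)
  have "S = (\<Sum>a<N. \<Sum>j<N. w a j * (v j * (v a - v j)))"
    unfolding S_def by (rule sum_sum_swap_symmetric[OF sym])
  then have "2 * S = (\<Sum>a<N. \<Sum>j<N. w a j * (v a * (v j - v a)) + w a j * (v j * (v a - v j)))"
    by (simp add: S_def sum.distrib)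
  also have "\<dots> = - (\<Sum>a<N. \<Sum>j<N. w a j * (v j - v a)\<^sup>2)"
    by (simp add: sum_negf[symmetric] power2_eq_square algebra_simps)
  finally show ?thesis using S by simp
qed

lemma vec_dot_laplacian_nonpos:
  fixes w :: "nat \<Rightarrow> nat \<Rightarrow> real"
  assumes "\<And>i j. w i j = w j i" and "\<And>i. w i i = 0" and "\<And>i j. 0 \<le> w i j"
  shows "vec_dot N v (mat_vec N (laplacian N w) v) \<le> 0"
  using assms by (simp add: vec_dot_laplacian sum_nonneg)

lemma vec_dot_laplacian_nonneg:
  fixes w :: "nat \<Rightarrow> nat \<Rightarrow> real"
  assumes "\<And>i j. w i j = w j i" and "\<And>i. w i i = 0" and "\<And>i j. w i j \<le> 0"
  shows "0 \<le> vec_dot N v (mat_vec N (laplacian N w) v)"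
  using assms by (simp add: vec_dot_laplacian sum_nonpos mult_nonpos_nonneg)

lemma laplacian_form_zero_imp_path_const:
  fixes w :: "nat \<Rightarrow> nat \<Rightarrow> real"
  assumes sym: "\<And>i j. w i j = w j i" and diag: "\<And>i. w i i = 0" and nonneg: "\<And>i j. 0 \<le> w i j"
    and zero: "vec_dot N v (mat_vec N (laplacian N w) v) = 0"
    and path: "(a, b) \<in> (sg_edges N w)\<^sup>*"
  shows "v a = v b"
proof -
  have terms_nonneg: "\<And>a j. 0 \<le> w a j * (v j - v a)\<^sup>2"
    using nonneg by simp
  have "(\<Sum>a<N. \<Sum>j<N. w a j * (v j - v a)\<^sup>2) = 0"
    using zero vec_dot_laplacian[of w N v, OF sym diag] by simp
  then have terms_zero: "\<forall>a<N. \<forall>j<N. w a j * (v j - v a)\<^sup>2 = 0"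
    using terms_nonneg by (simp add: sum_nonneg_eq_0_iff sum_nonneg)
  have edge: "v a = v j" if "(a, j) \<in> sg_edges N w" for a j
  proof -
    from that have "a < N" "j < N" "w a j \<noteq> 0" by (auto simp: sg_edges_def)
    then have "v j = v a" using terms_zero by auto
    then show ?thesis by simp
  qed
  from path show ?thesis
    by (induction rule: rtrancl_induct) (auto dest: edge)
qed

text \<open>\<open>\<Gamma>(-1)\<close> has the weights \<open>\<bar>\<gamma>\<^sub>i\<^sub>j\<bar>\<close>, i.e. it is the underlying unsigned graph.\<close>
lemma signed_graph_abs_laplacian_negative:
  assumes sg: "signed_graph N \<gamma>" and conn: "sg_connected N \<gamma>"
    and v: "(\<Sum>k<N. v k) = 0" and nonzero: "\<exists>k<N. v k \<noteq> 0"
  shows "vec_dot N v (mat_vec N (laplacian N (sg_at \<gamma> (-1))) v) < 0"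
proof -
  let ?w = "sg_at \<gamma> (-1)"
  have sym: "\<And>i j. ?w i j = ?w j i" and diag: "\<And>i. ?w i i = 0" and nonneg: "\<And>i j. 0 \<le> ?w i j"
    using sg by (auto simp: signed_graph_def sg_at_def)
  have edges: "sg_edges N ?w = sg_edges N \<gamma>"
    by (auto simp: sg_edges_def sg_at_def)
  obtain k where k: "k < N" "v k \<noteq> 0" using nonzero by blast
  show ?thesis
  proof (rule ccontr)
    assume "\<not> ?thesis"
    then have "vec_dot N v (mat_vec N (laplacian N ?w) v) = 0"
      using vec_dot_laplacian_nonpos[of ?w N v, OF sym diag nonneg] by simp
    then have "v j = v k" if "j < N" for j
      using laplacian_form_zero_imp_path_const[of ?w, OF sym diag nonneg] conn that k(1)
      by (simp add: sg_connected_def edges)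
    then have "(\<Sum>j<N. v j) = real N * v k" by simp
    then show False using v k by simp
  qed
qed

definition pos_weights :: "(nat \<Rightarrow> nat \<Rightarrow> real) \<Rightarrow> nat \<Rightarrow> nat \<Rightarrow> real" where
  "pos_weights \<gamma> i j = max (\<gamma> i j) 0"

definition neg_weights :: "(nat \<Rightarrow> nat \<Rightarrow> real) \<Rightarrow> nat \<Rightarrow> nat \<Rightarrow> real" where
  "neg_weights \<gamma> i j = min (\<gamma> i j) 0"

lemma laplacian_sg_at:
  "laplacian N (sg_at \<gamma> t) =
     (\<lambda>i j. laplacian N (pos_weights \<gamma>) i j + t * laplacian N (neg_weights \<gamma>) i j)"
proof (intro ext)
  fix i j
  have "sg_at \<gamma> t a b = pos_weights \<gamma> a b + t * neg_weights \<gamma> a b" for a b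
    by (simp add: sg_at_def pos_weights_def neg_weights_def)
  then show "laplacian N (sg_at \<gamma> t) i j =
      laplacian N (pos_weights \<gamma>) i j + t * laplacian N (neg_weights \<gamma>) i j"
    by (simp add: laplacian_def sum.distrib sum_distrib_left)
qed

theorem mainTheorem5:
  fixes N :: nat and \<gamma> :: "nat \<Rightarrow> nat \<Rightarrow> real" and lam :: "nat \<Rightarrow> real \<Rightarrow> real"
  assumes "signed_graph N \<gamma>"
    and "sg_connected N \<gamma>"
    and "restricted_eigen_branches N (\<lambda>t. laplacian N (sg_at \<gamma> t)) lam"
  shows "(\<forall>t v. (\<Sum>k<N. v k) = 0 \<longrightarrow> (\<Sum>k<N. mat_vec N (laplacian N (sg_at \<gamma> t)) v k) = 0)
    \<and> (\<forall>i<N-1. mono (lam i) \<and>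
         (\<forall>t. lam i t = 0 \<longrightarrow> (\<exists>d. (lam i has_real_derivative d) (at t) \<and> d > 0)))"
proof (intro conjI allI impI)
  fix t and v :: "nat \<Rightarrow> real"
  show "(\<Sum>k<N. mat_vec N (laplacian N (sg_at \<gamma> t)) v k) = 0"
    using assms(1) by (intro sum_mat_vec_laplacian) (auto simp: signed_graph_def sg_at_def)
next
  fix i assume i: "i < N - 1"
  define A where "A = laplacian N (pos_weights \<gamma>)"
  define B where "B = laplacian N (neg_weights \<gamma>)"
  have L: "laplacian N (sg_at \<gamma> t) = (\<lambda>a b. A a b + t * B a b)" for t
    by (simp add: A_def B_def laplacian_sg_at)
  have analytic: "real_analytic (lam i)"
    using assms(3) i by (simp add: restricted_eigen_branches_iff)
  have "\<forall>t. \<exists>e. sum_zero_eigenbasis N (laplacian N (sg_at \<gamma> t)) (\<lambda>j. lam j t) e"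
    using assms(3) by (simp add: restricted_eigen_branches_iff)
  from choice[OF this] obtain V
    where V: "\<And>t. sum_zero_eigenbasis N (laplacian N (sg_at \<gamma> t)) (\<lambda>j. lam j t) (V t)"
    by blast
  obtain c where c: "c > 0" and definite: "\<And>v. (\<Sum>k<N. v k) = 0 \<Longrightarrow>
      vec_dot N v (mat_vec N (laplacian N (sg_at \<gamma> (-1))) v) \<le> - c * vec_dot N v v"
    using eigenbasis_negative_definite_uniform[OF V[of "-1"]
        signed_graph_abs_laplacian_negative[OF assms(1,2)]] by blast
  have definite': "vec_dot N v (mat_vec N (\<lambda>a b. A a b - B a b) v) \<le> - c * vec_dot N v v"
    if "(\<Sum>k<N. v k) = 0" for v
    using definite[OF that] by (simp add: L)
  have B_nonneg: "0 \<le> vec_dot N v (mat_vec N B v)" for v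
    unfolding B_def using assms(1)
    by (intro vec_dot_laplacian_nonneg) (auto simp: neg_weights_def signed_graph_def)
  have bounds: "0 \<le> d \<and> c \<le> (1 + t) * d - lam i t"
    if "(lam i has_real_derivative d) (at t)" for t d
    using eigen_branch_derivative_bounds[OF V[unfolded L] i that B_nonneg definite'] by simp
  show "mono (lam i)"
    by (rule real_analytic_mono[OF analytic]) (use bounds in blast)
  fix t assume zero: "lam i t = 0"
  obtain d where d: "(lam i has_real_derivative d) (at t)"
    using real_analytic_has_derivative[OF analytic] .
  then have "d > 0"
    using bounds[OF d] zero c by (cases "d = 0") auto
  with d show "\<exists>d. (lam i has_real_derivative d) (at t) \<and> d > 0" by blast
qed

end
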